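(* Let $k\ge 3$, $F$ a field, $\Phi\le F^*$ a subgroup of order $k$ with generator $\varphi$, and suppose $(F,\Phi)$ is circular. Then the group $\mathcal{G}_1$ maps $\mathcal{O}_\varphi(F,k)$ into itself (so acts on it). If moreover $k$ is even, then $\mathcal{G}_0$ acts on $\mathcal{O}_\varphi(F,k)$.
   Context: $\mathbf{k}=\{1,\dots,k-1\}$, $\mathbf{k}_0=\{0,\dots,k-1\}$. $(F,\Phi)$ is circular if $|(\Phi a+b)\cap\Phi c|\le2$ for all $a,b,c\in F^*$, with $\Phi a+b=\{\lambda a+b:\lambda\in\Phi\}$. A quadruple $(i,j\mid s,t)\in\mathbf{k}^4$ with $i\ne s$ is an overlap (w.r.t. $\varphi$) if $\varphi^\omega(\varphi^j-1)(\varphi^s-1)=(\varphi^i-1)(\varphi^t-1)$ for some $\omega\in\mathbf{k}_0$; it is trivial if one of $i\equiv\pm j$, $j\equiv\pm t$, $t\equiv\pm s$, $s\equiv\pm i\pmod k$ holds, nontrivial otherwise; $\mathcal{O}_\varphi(F,k)$ is the set of nontrivial overlaps. Groups acting on $\mathbf{k}^4$ (quadruples written $(i,j\mid s,t)$): for $m=1,2,3,4$, $\kappa_m$ replaces the $m$-th entry $u$ by $k-u$. Let $D_4$ be the group of coordinate permutations generated by the transpositions $(i,t)$, $(j,s)$ and the double transposition $(i,j)(s,t)$ (a dihedral group of order 8, consisting of the identity and $(i,t),(j,s),(i,t)(j,s),(i,s)(j,t),(i,j)(s,t),(i,j,t,s),(i,s,t,j)$). $\mathcal{G}_0$ is the group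 generated by $\kappa_1,\dots,\kappa_4$ and $D_4$; $\mathcal{G}_1$ is the group generated by $\kappa_1\kappa_4,\kappa_2\kappa_4,\kappa_3\kappa_4$ and $D_4$. *)

theory Defs
  imports Main
begin

definition circular :: "'a::field set \<Rightarrow> bool" where
  "circular Phi \<longleftrightarrow>
     (\<forall>a b c. a \<noteq> 0 \<longrightarrow> b \<noteq> 0 \<longrightarrow> c \<noteq> 0 \<longrightarrow>
        card ((\<lambda>l. l * a + b) ` Phi \<inter> (\<lambda>l. l * c) ` Phi) \<le> 2)"

type_synonym quad = "nat \<times> nat \<times> nat \<times> nat"

text \<open>Quadruples (i,j|s,t) are written (i,j,s,t).\<close>
definition is_overlap :: "'a::field \<Rightarrow> nat \<Rightarrow> quad \<Rightarrow> bool" where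
  "is_overlap phi k q = (case q of (i,j,s,t) \<Rightarrow>
     i \<in> {1..<k} \<and> j \<in> {1..<k} \<and> s \<in> {1..<k} \<and> t \<in> {1..<k} \<and> i \<noteq> s \<and>
     (\<exists>w\<in>{0..<k}. phi ^ w * (phi ^ j - 1) * (phi ^ s - 1) = (phi ^ i - 1) * (phi ^ t - 1)))"

definition pmcong :: "nat \<Rightarrow> nat \<Rightarrow> nat \<Rightarrow> bool" where
  "pmcong k u v \<longleftrightarrow> u mod k = v mod k \<or> (u + v) mod k = 0"

definition trivial_quad :: "nat \<Rightarrow> quad \<Rightarrow> bool" where
  "trivial_quad k q = (case q of (i,j,s,t) \<Rightarrow>
     pmcong k i j \<or> pmcong k j t \<or> pmcong k t s \<or> pmcong k s i)"

definition overlaps :: "'a::field \<Rightarrow> nat \<Rightarrow> quad set" where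
  "overlaps phi k = {q. is_overlap phi k q \<and> \<not> trivial_quad k q}"

definition kappa1 :: "nat \<Rightarrow> quad \<Rightarrow> quad" where
  "kappa1 k q = (case q of (i,j,s,t) \<Rightarrow> (k - i, j, s, t))"
definition kappa2 :: "nat \<Rightarrow> quad \<Rightarrow> quad" where
  "kappa2 k q = (case q of (i,j,s,t) \<Rightarrow> (i, k - j, s, t))"
definition kappa3 :: "nat \<Rightarrow> quad \<Rightarrow> quad" where
  "kappa3 k q = (case q of (i,j,s,t) \<Rightarrow> (i, j, k - s, t))"
definition kappa4 :: "nat \<Rightarrow> quad \<Rightarrow> quad" where
  "kappa4 k q = (case q of (i,j,s,t) \<Rightarrow> (i, j, s, k - t))"

text \<open>Generators of D4: transpositions (i,t), (j,s) and (i,j)(s,t).\<close>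
definition swap_it :: "quad \<Rightarrow> quad" where
  "swap_it q = (case q of (i,j,s,t) \<Rightarrow> (t, j, s, i))"
definition swap_js :: "quad \<Rightarrow> quad" where
  "swap_js q = (case q of (i,j,s,t) \<Rightarrow> (i, s, j, t))"
definition swap_ij_st :: "quad \<Rightarrow> quad" where
  "swap_ij_st q = (case q of (i,j,s,t) \<Rightarrow> (j, i, t, s))"

text \<open>Group generated by a set of maps (all generators used are involutions,
  so the generated monoid is the generated group).\<close>
inductive_set generated :: "('b \<Rightarrow> 'b) set \<Rightarrow> ('b \<Rightarrow> 'b) set" for gens where
  gen_id: "id \<in> generated gens"
| gen_step: "g \<in> generated gens \<Longrightarrow> h \<in> gens \<Longrightarrow> h \<circ> g \<in> generated gens"

definition G0 :: "nat \<Rightarrow> (quad \<Rightarrow> quad) set" where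
  "G0 k = generated {kappa1 k, kappa2 k, kappa3 k, kappa4 k, swap_it, swap_js, swap_ij_st}"

definition G1 :: "nat \<Rightarrow> (quad \<Rightarrow> quad) set" where
  "G1 k = generated {kappa1 k \<circ> kappa4 k, kappa2 k \<circ> kappa4 k, kappa3 k \<circ> kappa4 k,
                     swap_it, swap_js, swap_ij_st}"

end

theory Submission
  imports Defs
begin

text \<open>Write \<open>f u = \<phi>^u - 1\<close>; a quadruple \<open>(i,j|s,t)\<close> satisfies the overlap equation iff
  \<open>f i * f t\<close> is a power of \<open>\<phi>\<close> times \<open>f j * f s\<close>. Since \<open>\<phi>\<close> has order \<open>k\<close>,
  \<open>f (k - u) = - \<phi>^(k-u) * f u\<close>, so each \<open>\<kappa>\<^sub>m\<close> multiplies one factor by \<open>-\<phi>^(k-u)\<close>.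
  Two such sign changes cancel, which handles \<open>\<kappa>\<^sub>m \<kappa>\<^sub>4\<close>; a single one is harmless
  when \<open>-1\<close> is a power of \<open>\<phi>\<close>, which for even \<open>k\<close> holds as \<open>\<phi>^(k/2) = -1\<close>.
  The permutations in \<open>D\<^sub>4\<close> merely commute the factors or exchange the two products.
  All generators respect the congruences \<open>u \<equiv> \<plusminus>v\<close> defining triviality.\<close>

lemma power_mod_eq:
  fixes x :: "'a::monoid_mult"
  assumes "x ^ d = 1"
  shows "x ^ (n mod d) = x ^ n"
proof -
  have "x ^ n = x ^ (d * (n div d) + n mod d)" by simp
  also have "\<dots> = (x ^ d) ^ (n div d) * x ^ (n mod d)"
    by (simp only: power_add power_mult)
  finally have "x ^ n = (x ^ d) ^ (n div d) * x ^ (n mod d)" .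
  with assms show ?thesis by simp
qed

lemma card_range_power:
  fixes x :: "'a::field"
  assumes "0 < d" "x ^ d = 1" and minimal: "\<And>n. 0 < n \<Longrightarrow> n < d \<Longrightarrow> x ^ n \<noteq> 1"
  shows "card (range (\<lambda>n. x ^ n)) = d"
proof -
  have "x \<noteq> 0" using assms(1,2) by (auto simp: power_0_left)
  have "range (\<lambda>n. x ^ n) = (\<lambda>n. x ^ n) ` {..<d}"
    using power_mod_eq[OF assms(2)] assms(1) by (auto intro!: image_eqI[of _ _ "_ mod d"])
  moreover have "inj_on (\<lambda>n. x ^ n) {..<d}"
  proof (rule linorder_inj_onI')
    fix a b assume "a \<in> {..<d}" "b \<in> {..<d}" "a < b"
    then have "0 < b - a" "b - a < d" by auto
    then have "x ^ b / x ^ a \<noteq> 1"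
      using minimal[of "b - a"] \<open>x \<noteq> 0\<close> \<open>a < b\<close> by (simp add: power_diff)
    then show "x ^ a \<noteq> x ^ b" using \<open>x \<noteq> 0\<close> by (metis divide_self power_not_zero)
  qed
  ultimately show ?thesis by (simp add: card_image)
qed

lemma order_of_card_range_power:
  fixes x :: "'a::field"
  assumes "0 \<notin> range (\<lambda>n. x ^ n)" "card (range (\<lambda>n. x ^ n)) = k" "0 < k"
  shows "x ^ k = 1" and "\<And>n. 0 < n \<Longrightarrow> n < k \<Longrightarrow> x ^ n \<noteq> 1"
proof -
  let ?P = "\<lambda>n. 0 < n \<and> x ^ n = 1"
  have "x \<noteq> 0" using assms(1) by (metis power_one_right rangeI)
  have "\<not> inj (\<lambda>n::nat. x ^ n)"
    using assms(2,3) finite_imageD card_gt_0_iff by blast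
  then obtain a b where "a < b" "x ^ a = x ^ b"
    by (metis injI linorder_neqE_nat)
  then have "?P (b - a)" using \<open>x \<noteq> 0\<close> by (simp add: power_diff)
  define d where "d = (LEAST n. ?P n)"
  have d: "?P d" unfolding d_def by (rule LeastI) fact
  have minimal: "\<And>n. 0 < n \<Longrightarrow> n < d \<Longrightarrow> x ^ n \<noteq> 1"
    unfolding d_def using not_less_Least by blast
  have "d = k" using card_range_power[of d x] d minimal assms(2) by simp
  then show "x ^ k = 1" "\<And>n. 0 < n \<Longrightarrow> n < k \<Longrightarrow> x ^ n \<noteq> 1"
    using d minimal by auto
qed

lemma power_half_order:
  fixes x :: "'a::field"
  assumes "x ^ (2 * m) = 1" "x ^ m \<noteq> 1"
  shows "x ^ m = -1"
proof -
  have "(x ^ m - 1) * (x ^ m + 1) = x ^ (2 * m) - 1"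
    by (simp add: algebra_simps power_mult power2_eq_square)
  with assms show ?thesis by (simp add: eq_neg_iff_add_eq_0)
qed

definition power_multiple :: "'a::field \<Rightarrow> 'a \<Rightarrow> 'a \<Rightarrow> bool" where
  "power_multiple phi x y \<longleftrightarrow> (\<exists>n. y = phi ^ n * x)"

lemma power_multiple_power_right:
  "power_multiple phi x y \<Longrightarrow> power_multiple phi x (phi ^ m * y)"
  unfolding power_multiple_def by (metis mult.assoc power_add)

lemma power_multiple_uminus:
  "power_multiple phi x y \<Longrightarrow> power_multiple phi (- x) (- y)"
  unfolding power_multiple_def by auto

lemma power_multiple_sym:
  assumes "phi ^ k = 1" "0 < k" "power_multiple phi x y"
  shows "power_multiple phi y x"
proof -
  obtain n where y: "y = phi ^ n * x" using assms(3) unfolding power_multiple_def by blast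
  have "phi ^ (n * (k - 1)) * phi ^ n = (phi ^ k) ^ n"
    using assms(2) by (simp flip: power_add power_mult add: algebra_simps)
  then have "x = phi ^ (n * (k - 1)) * y" using assms(1) by (simp add: y mult.assoc)
  then show ?thesis unfolding power_multiple_def by blast
qed

lemma power_multiple_power_left:
  assumes "phi ^ k = 1" "0 < k" "power_multiple phi x y"
  shows "power_multiple phi (phi ^ m * x) y"
  using assms power_multiple_sym power_multiple_power_right by metis

lemma power_complement_minus_one:
  fixes phi :: "'a::field"
  assumes "phi ^ k = 1" "u \<le> k"
  shows "phi ^ (k - u) - 1 = - (phi ^ (k - u) * (phi ^ u - 1))"
proof -
  have "phi ^ (k - u) * phi ^ u = 1" using assms by (simp flip: power_add)
  then show ?thesis by (simp add: algebra_simps)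
qed

definition nontrivial_quad :: "nat \<Rightarrow> quad \<Rightarrow> bool" where
  "nontrivial_quad k q \<longleftrightarrow>
     (case q of (i,j,s,t) \<Rightarrow> i \<in> {1..<k} \<and> j \<in> {1..<k} \<and> s \<in> {1..<k} \<and> t \<in> {1..<k})
     \<and> \<not> trivial_quad k q"

definition overlap_equation :: "'a::field \<Rightarrow> quad \<Rightarrow> bool" where
  "overlap_equation phi q \<longleftrightarrow> (case q of (i,j,s,t) \<Rightarrow>
     power_multiple phi ((phi ^ j - 1) * (phi ^ s - 1)) ((phi ^ i - 1) * (phi ^ t - 1)))"

lemma overlaps_eq:
  fixes phi :: "'a::field"
  assumes "phi ^ k = 1"
  shows "overlaps phi k = {q. nontrivial_quad k q \<and> overlap_equation phi q}"
proof (intro set_eqI iffI; clarsimp)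
  fix i j s t
  let ?L = "(phi ^ j - 1) * (phi ^ s - 1)" and ?R = "(phi ^ i - 1) * (phi ^ t - 1)"
  have eq_iff: "(\<exists>w\<in>{0..<k}. phi ^ w * (phi ^ j - 1) * (phi ^ s - 1) = ?R)
      \<longleftrightarrow> power_multiple phi ?L ?R" if "0 < k"
  proof
    assume "\<exists>w\<in>{0..<k}. phi ^ w * (phi ^ j - 1) * (phi ^ s - 1) = ?R"
    then show "power_multiple phi ?L ?R"
      unfolding power_multiple_def by (metis mult.assoc)
  next
    assume "power_multiple phi ?L ?R"
    then obtain n where "?R = phi ^ n * ?L" unfolding power_multiple_def by blast
    then have "phi ^ (n mod k) * (phi ^ j - 1) * (phi ^ s - 1) = ?R"
      using power_mod_eq[OF assms] by (simp add: mult.assoc)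
    with that show "\<exists>w\<in>{0..<k}. phi ^ w * (phi ^ j - 1) * (phi ^ s - 1) = ?R" by force
  qed
  show "nontrivial_quad k (i,j,s,t) \<and> overlap_equation phi (i,j,s,t)"
    if "(i,j,s,t) \<in> overlaps phi k"
    using that eq_iff unfolding overlaps_def is_overlap_def nontrivial_quad_def overlap_equation_def
    by auto
  show "(i,j,s,t) \<in> overlaps phi k"
    if "nontrivial_quad k (i,j,s,t)" "overlap_equation phi (i,j,s,t)"
  proof -
    have "i \<noteq> s" "0 < k"
      using that(1) by (auto simp: nontrivial_quad_def trivial_quad_def pmcong_def)
    then show ?thesis
      using that eq_iff unfolding overlaps_def is_overlap_def nontrivial_quad_def overlap_equation_def
      by auto
  qed
qed

lemma pmcong_iff:
  assumes "0 < u" "u < k" "0 < v" "v < k"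
  shows "pmcong k u v \<longleftrightarrow> u = v \<or> u + v = k"
proof -
  have "(u + v) mod k = 0 \<longleftrightarrow> u + v = k"
  proof
    assume "(u + v) mod k = 0"
    then obtain c where c: "u + v = k * c" by auto
    have "k * c < k * 2" using c assms by linarith
    moreover have "c \<noteq> 0" using c assms by (metis add_gr_0 mult_0_right less_irrefl)
    ultimately have "c = 1" by simp
    with c show "u + v = k" by simp
  qed simp
  with assms show ?thesis by (simp add: pmcong_def)
qed

lemma pmcong_commute: "pmcong k u v \<longleftrightarrow> pmcong k v u"
  unfolding pmcong_def by (auto simp: add.commute)

lemma pmcong_complement_left:
  assumes "0 < u" "u < k" "0 < v" "v < k"
  shows "pmcong k (k - u) v \<longleftrightarrow> pmcong k u v"
  using assms by (simp add: pmcong_iff) linarith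

lemma pmcong_complement_right:
  assumes "0 < u" "u < k" "0 < v" "v < k"
  shows "pmcong k u (k - v) \<longleftrightarrow> pmcong k u v"
  using assms pmcong_complement_left pmcong_commute by metis

lemma nontrivial_quad_generator:
  assumes "h \<in> {kappa1 k, kappa2 k, kappa3 k, kappa4 k, swap_it, swap_js, swap_ij_st}"
    and "nontrivial_quad k q"
  shows "nontrivial_quad k (h q)"
proof -
  obtain i j s t where q: "q = (i,j,s,t)" by (cases q)
  have range: "0 < i" "i < k" "0 < j" "j < k" "0 < s" "s < k" "0 < t" "t < k"
    and "\<not> trivial_quad k (i,j,s,t)"
    using assms(2) by (auto simp: q nontrivial_quad_def)
  then have "\<not> trivial_quad k (h (i,j,s,t))"
    using assms(1) unfolding trivial_quad_def
    by (elim insertE emptyE; simp add: pmcong_complement_left pmcong_complement_right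
        kappa1_def kappa2_def kappa3_def kappa4_def swap_it_def swap_js_def swap_ij_st_def;
        metis pmcong_commute)
  moreover have "case h (i,j,s,t) of (i,j,s,t) \<Rightarrow> i \<in> {1..<k} \<and> j \<in> {1..<k} \<and> s \<in> {1..<k} \<and> t \<in> {1..<k}"
    using assms(1) range
    by (elim insertE emptyE) (auto simp: kappa1_def kappa2_def kappa3_def kappa4_def swap_it_def swap_js_def swap_ij_st_def)
  ultimately show ?thesis by (simp add: q nontrivial_quad_def)
qed

lemma image_overlaps_subset:
  fixes phi :: "'a::field"
  assumes "phi ^ k = 1"
    and "\<And>q. nontrivial_quad k q \<Longrightarrow> nontrivial_quad k (g q)"
    and "\<And>q. nontrivial_quad k q \<Longrightarrow> overlap_equation phi q \<Longrightarrow> overlap_equation phi (g q)"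
  shows "g ` overlaps phi k \<subseteq> overlaps phi k"
  using assms by (auto simp: overlaps_eq)

lemma overlap_equation_swap_it: "overlap_equation phi (swap_it q) = overlap_equation phi q"
  by (cases q) (simp add: overlap_equation_def swap_it_def mult.commute)

lemma overlap_equation_swap_js: "overlap_equation phi (swap_js q) = overlap_equation phi q"
  by (cases q) (simp add: overlap_equation_def swap_js_def mult.commute)

lemma overlap_equation_swap_ij_st:
  assumes "phi ^ k = 1" "0 < k" "overlap_equation phi q"
  shows "overlap_equation phi (swap_ij_st q)"
  using assms power_multiple_sym[OF assms(1,2)]
  by (cases q) (simp add: overlap_equation_def swap_ij_st_def)

lemma overlap_equation_kappa14:
  fixes phi :: "'a::field"
  assumes "phi ^ k = 1" "i \<le> k" "t \<le> k" "overlap_equation phi (i,j,s,t)"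
  shows "overlap_equation phi (k - i, j, s, k - t)"
proof -
  have "(phi ^ (k - i) - 1) * (phi ^ (k - t) - 1)
      = phi ^ (k - i) * (phi ^ (k - t) * ((phi ^ i - 1) * (phi ^ t - 1)))"
    using assms(1-3) by (simp add: power_complement_minus_one algebra_simps)
  with assms(4) show ?thesis
    by (simp add: overlap_equation_def power_multiple_power_right)
qed

lemma overlap_equation_kappa24:
  fixes phi :: "'a::field"
  assumes "phi ^ k = 1" "0 < k" "j \<le> k" "t \<le> k" "overlap_equation phi (i,j,s,t)"
  shows "overlap_equation phi (i, k - j, s, k - t)"
proof -
  have "(phi ^ (k - j) - 1) * (phi ^ s - 1) = - (phi ^ (k - j) * ((phi ^ j - 1) * (phi ^ s - 1)))"
    "(phi ^ i - 1) * (phi ^ (k - t) - 1) = - (phi ^ (k - t) * ((phi ^ i - 1) * (phi ^ t - 1)))"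
    using assms(1,3,4) by (simp_all add: power_complement_minus_one algebra_simps)
  with assms(5) show ?thesis
    by (simp add: overlap_equation_def power_multiple_uminus power_multiple_power_right
        power_multiple_power_left[OF assms(1,2)])
qed

lemma overlap_equation_kappa34:
  fixes phi :: "'a::field"
  assumes "phi ^ k = 1" "0 < k" "s \<le> k" "t \<le> k" "overlap_equation phi (i,j,s,t)"
  shows "overlap_equation phi (i, j, k - s, k - t)"
proof -
  have "(phi ^ j - 1) * (phi ^ (k - s) - 1) = - (phi ^ (k - s) * ((phi ^ j - 1) * (phi ^ s - 1)))"
    "(phi ^ i - 1) * (phi ^ (k - t) - 1) = - (phi ^ (k - t) * ((phi ^ i - 1) * (phi ^ t - 1)))"
    using assms(1,3,4) by (simp_all add: power_complement_minus_one algebra_simps)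
  with assms(5) show ?thesis
    by (simp add: overlap_equation_def power_multiple_uminus power_multiple_power_right
        power_multiple_power_left[OF assms(1,2)])
qed

lemma overlap_equation_kappa1:
  fixes phi :: "'a::field"
  assumes "phi ^ k = 1" "phi ^ m = -1" "i \<le> k" "overlap_equation phi (i,j,s,t)"
  shows "overlap_equation phi (k - i, j, s, t)"
proof -
  have eq: "(phi ^ (k - i) - 1) * (phi ^ t - 1) = phi ^ m * (phi ^ (k - i) * ((phi ^ i - 1) * (phi ^ t - 1)))"
    using assms(1-3) by (simp add: power_complement_minus_one algebra_simps)
  from assms(4) show ?thesis
    unfolding overlap_equation_def prod.case eq by (intro power_multiple_power_right)
qed

lemma overlap_equation_kappa4:
  fixes phi :: "'a::field"
  assumes "phi ^ k = 1" "phi ^ m = -1" "t \<le> k" "overlap_equation phi (i,j,s,t)"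
  shows "overlap_equation phi (i, j, s, k - t)"
proof -
  have eq: "(phi ^ i - 1) * (phi ^ (k - t) - 1) = phi ^ m * (phi ^ (k - t) * ((phi ^ i - 1) * (phi ^ t - 1)))"
    using assms(1-3) by (simp add: power_complement_minus_one algebra_simps)
  from assms(4) show ?thesis
    unfolding overlap_equation_def prod.case eq by (intro power_multiple_power_right)
qed

lemma overlap_equation_kappa2:
  fixes phi :: "'a::field"
  assumes "phi ^ k = 1" "0 < k" "phi ^ m = -1" "j \<le> k" "overlap_equation phi (i,j,s,t)"
  shows "overlap_equation phi (i, k - j, s, t)"
proof -
  have eq: "(phi ^ (k - j) - 1) * (phi ^ s - 1) = phi ^ m * (phi ^ (k - j) * ((phi ^ j - 1) * (phi ^ s - 1)))"
    using assms(1,3,4) by (simp add: power_complement_minus_one algebra_simps)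
  from assms(5) show ?thesis
    unfolding overlap_equation_def prod.case eq by (intro power_multiple_power_left[OF assms(1,2)])
qed

lemma overlap_equation_kappa3:
  fixes phi :: "'a::field"
  assumes "phi ^ k = 1" "0 < k" "phi ^ m = -1" "s \<le> k" "overlap_equation phi (i,j,s,t)"
  shows "overlap_equation phi (i, j, k - s, t)"
proof -
  have eq: "(phi ^ j - 1) * (phi ^ (k - s) - 1) = phi ^ m * (phi ^ (k - s) * ((phi ^ j - 1) * (phi ^ s - 1)))"
    using assms(1,3,4) by (simp add: power_complement_minus_one algebra_simps)
  from assms(5) show ?thesis
    unfolding overlap_equation_def prod.case eq by (intro power_multiple_power_left[OF assms(1,2)])
qed

lemma nontrivial_quad_le:
  assumes "nontrivial_quad k (i,j,s,t)"
  shows "i \<le> k" "j \<le> k" "s \<le> k" "t \<le> k"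
  using assms by (auto simp: nontrivial_quad_def)

lemma swap_image_overlaps:
  fixes phi :: "'a::field"
  assumes "phi ^ k = 1" "0 < k" "h \<in> {swap_it, swap_js, swap_ij_st}"
  shows "h ` overlaps phi k \<subseteq> overlaps phi k"
proof (rule image_overlaps_subset[OF assms(1)])
  show "nontrivial_quad k (h q)" if "nontrivial_quad k q" for q
    using assms(3) nontrivial_quad_generator[of h k q] that by blast
  show "overlap_equation phi (h q)" if "overlap_equation phi q" for q
    using assms(3) that overlap_equation_swap_ij_st[OF assms(1,2) that]
    by (auto simp only: insert_iff empty_iff overlap_equation_swap_it overlap_equation_swap_js)
qed

lemma kappa_pair_image_overlaps:
  fixes phi :: "'a::field"
  assumes "phi ^ k = 1" "0 < k"
    and "h \<in> {kappa1 k \<circ> kappa4 k, kappa2 k \<circ> kappa4 k, kappa3 k \<circ> kappa4 k}"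
  shows "h ` overlaps phi k \<subseteq> overlaps phi k"
proof (rule image_overlaps_subset[OF assms(1)])
  show "nontrivial_quad k (h q)" if "nontrivial_quad k q" for q
  proof -
    have "nontrivial_quad k (kappa4 k q)"
      using nontrivial_quad_generator[of "kappa4 k" k q] that by blast
    moreover from assms(3) obtain g where "g \<in> {kappa1 k, kappa2 k, kappa3 k}" "h = g \<circ> kappa4 k"
      by blast
    ultimately show ?thesis
      using nontrivial_quad_generator[of g k "kappa4 k q"] by auto
  qed
  show "overlap_equation phi (h q)" if "nontrivial_quad k q" "overlap_equation phi q" for q
  proof -
    obtain i j s t where q: "q = (i,j,s,t)" by (cases q)
    note le = nontrivial_quad_le[OF that(1)[unfolded q]]
    note eq = that(2)[unfolded q]
    from assms(3) consider "h = kappa1 k \<circ> kappa4 k" | "h = kappa2 k \<circ> kappa4 k"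
      | "h = kappa3 k \<circ> kappa4 k" by blast
    then show ?thesis
    proof cases
      case 1
      then show ?thesis
        using overlap_equation_kappa14[OF assms(1) le(1,4) eq] by (simp add: q kappa1_def kappa4_def)
    next
      case 2
      then show ?thesis
        using overlap_equation_kappa24[OF assms(1,2) le(2,4) eq] by (simp add: q kappa2_def kappa4_def)
    next
      case 3
      then show ?thesis
        using overlap_equation_kappa34[OF assms(1,2) le(3,4) eq] by (simp add: q kappa3_def kappa4_def)
    qed
  qed
qed

lemma kappa_image_overlaps:
  fixes phi :: "'a::field"
  assumes "phi ^ k = 1" "0 < k" "phi ^ m = -1"
    and "h \<in> {kappa1 k, kappa2 k, kappa3 k, kappa4 k}"
  shows "h ` overlaps phi k \<subseteq> overlaps phi k"
proof (rule image_overlaps_subset[OF assms(1)])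
  show "nontrivial_quad k (h q)" if "nontrivial_quad k q" for q
    using assms(4) nontrivial_quad_generator[of h k q] that by blast
  show "overlap_equation phi (h q)" if "nontrivial_quad k q" "overlap_equation phi q" for q
  proof -
    obtain i j s t where q: "q = (i,j,s,t)" by (cases q)
    note le = nontrivial_quad_le[OF that(1)[unfolded q]]
    note eq = that(2)[unfolded q]
    from assms(4) consider "h = kappa1 k" | "h = kappa2 k" | "h = kappa3 k" | "h = kappa4 k"
      by blast
    then show ?thesis
    proof cases
      case 1
      then show ?thesis
        using overlap_equation_kappa1[OF assms(1,3) le(1) eq] by (simp add: q kappa1_def)
    next
      case 2
      then show ?thesis
        using overlap_equation_kappa2[OF assms(1-3) le(2) eq] by (simp add: q kappa2_def)
    next
      case 3
      then show ?thesis
        using overlap_equation_kappa3[OF assms(1-3) le(3) eq] by (simp add: q kappa3_def)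
    next
      case 4
      then show ?thesis
        using overlap_equation_kappa4[OF assms(1,3) le(4) eq] by (simp add: q kappa4_def)
    qed
  qed
qed

lemma generated_image_subset:
  assumes "g \<in> generated gens" "\<And>h. h \<in> gens \<Longrightarrow> h ` S \<subseteq> S"
  shows "g ` S \<subseteq> S"
  using assms(1)
proof induction
  case gen_id
  then show ?case by simp
next
  case (gen_step g h)
  then show ?case using assms(2)[of h] by (auto simp flip: image_comp)
qed

theorem lemma16:
  fixes phi :: "'a::field" and Phi :: "'a set" and k :: nat
  assumes "k \<ge> 3"
    and "Phi = range (\<lambda>n. phi ^ n)"
    and "0 \<notin> Phi"
    and "card Phi = k"
    and "circular Phi"
  shows "(\<forall>g\<in>G1 k. g ` overlaps phi k \<subseteq> overlaps phi k)
    \<and> (even k \<longrightarrow> (\<forall>g\<in>G0 k. g ` overlaps phi k \<subseteq> overlaps phi k))"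
proof (intro conjI impI ballI)
  have k: "0 < k" using assms(1) by simp
  have order: "phi ^ k = 1" "\<And>n. 0 < n \<Longrightarrow> n < k \<Longrightarrow> phi ^ n \<noteq> 1"
    using order_of_card_range_power[of phi k] assms(2-4) k by auto
  show "g ` overlaps phi k \<subseteq> overlaps phi k" if "g \<in> G1 k" for g
    using that unfolding G1_def
    by (rule generated_image_subset)
      (use swap_image_overlaps[OF order(1) k] kappa_pair_image_overlaps[OF order(1) k] in blast)
  show "g ` overlaps phi k \<subseteq> overlaps phi k" if "even k" "g \<in> G0 k" for g
  proof -
    from \<open>even k\<close> obtain m where "k = 2 * m" by blast
    then have minus_one: "phi ^ m = -1"
      using power_half_order[of phi m] order(1) order(2)[of m] k by simp
    show ?thesis
      using \<open>g \<in> G0 k\<close> unfolding G0_def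
      by (rule generated_image_subset)
        (use swap_image_overlaps[OF order(1) k] kappa_image_overlaps[OF order(1) k minus_one] in blast)
  qed
qed

end
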